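(* Let $\bm{H}$ be a random matrix with values in $\mathbb{C}^{N_R\times N_T}$, $p$ a nonnegative random variable (random transmit power), $\lambda_{\max}$ the maximum eigenvalue of $\bm{H}\bm{H}^\ast$, and $c=W\log_2\det(\bm{I}_{N_R}+\frac{1}{N_TN_0W}p\bm{H}\bm{H}^\ast)$ with constants $W,N_0>0$. Consider the conditions (each with "for some $\theta>0$"): (0) $\mathbb{E}[(1+p\lambda_{\max})^\theta]<\infty$; (1) $\mathbb{E}[(1+p\operatorname{Tr}[\bm{H}\bm{H}^\ast])^\theta]<\infty$; (2) $\mathbb{E}[(\operatorname{Tr}[\bm{I}+p\bm{H}\bm{H}^\ast])^\theta]<\infty$; (3) $\mathbb{E}[(\operatorname{Tr}[e^{p\bm{H}\bm{H}^\ast}])^\theta]<\infty$; (4) $\mathbb{E}[e^{\theta p\lambda_{\max}}]<\infty$; (5) $\mathbb{E}[\operatorname{Tr}[e^{\theta p\bm{H}\bm{H}^\ast}]]<\infty$; (6) $\mathbb{E}[(p\lambda_{\max})^\theta]<\infty$; (7) $\mathbb{E}[e^{\theta p\operatorname{Tr}[\bm{H}\bm{H}^\ast]}]<\infty$. Then (0)$\iff$(1), (2)$\Rightarrow$(1), (3)$\Rightarrow$(2), (4)$\Rightarrow$(1), (5)$\Rightarrow$(4), (0)$\iff$(6), (4)$\iff$(7), and each of these conditions is sufficient for the distribution of $c$ to be light-tailed.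
   Context: A nonnegative random variable $X$ is light-tailed if $\Pr(X>x)=O(e^{-\theta x})$ for some $\theta>0$, equivalently $\mathbb{E}[e^{\theta X}]<\infty$ for some $\theta>0$. $e^{\bm{A}}$ denotes the matrix exponential. *)

theory Defs
  imports "HOL-Analysis.Analysis" "HOL-Probability.Probability" "HOL-Library.Landau_Symbols"
begin

definition ctrans :: "complex^'n^'m \<Rightarrow> complex^'m^'n" where
  "ctrans A = (\<chi> i j. cnj (A $ j $ i))"

primrec matpow :: "complex^'n^'n \<Rightarrow> nat \<Rightarrow> complex^'n^'n" where
  "matpow A 0 = mat 1"
| "matpow A (Suc k) = A ** matpow A k"

definition mexp :: "complex^'n^'n \<Rightarrow> complex^'n^'n" where
  "mexp A = (\<Sum>k. scaleR (1 / fact k) (matpow A k))"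

definition eigenvalue :: "complex^'n^'n \<Rightarrow> complex \<Rightarrow> bool" where
  "eigenvalue A \<mu> \<longleftrightarrow> (\<exists>v. v \<noteq> 0 \<and> A *v v = \<mu> *s v)"

definition lambda_max :: "complex^'n^'n \<Rightarrow> real" where
  "lambda_max A = Max {\<mu>::real. eigenvalue A (complex_of_real \<mu>)}"

definition light_tailed :: "'a measure \<Rightarrow> ('a \<Rightarrow> real) \<Rightarrow> bool" where
  "light_tailed M X \<longleftrightarrow> (\<exists>\<theta>>0. (\<lambda>x. measure M {\<omega>\<in>space M. X \<omega> > x}) \<in> O[at_top](\<lambda>x. exp (- \<theta> * x)))"

definition finite_exp :: "'a measure \<Rightarrow> ('a \<Rightarrow> real) \<Rightarrow> bool" where
  "finite_exp M f \<longleftrightarrow> (\<integral>\<^sup>+ \<omega>. ennreal (f \<omega>) \<partial>M) < \<infinity>"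

end

theory Submission
  imports Defs
begin

(* Write G = H H^*, L = p lambda_max(G) and T = p tr G.  For the positive semidefinite G,
   lambda_max(G) is the squared operator norm of H^* and tr G its squared Frobenius norm,
   so 0 <= L <= T <= N_R L.  Hence each moment condition on L is equivalent to the
   corresponding one on T after rescaling theta (Bernoulli's inequality for the
   polynomial moments).  Conditions (2), (3), (5) are stronger, because
   tr (I + p G) = N_R + T <= tr e^(p G) and e^(theta L) <= tr e^(theta p G); the latter holds
   since tr G^k >= lambda_max^k.  Finally, bounding each entry of I + a G by 1 + a tr G in
   the Leibniz formula gives c <= A + B ln (1 + T), and Markov's inequality for (1 + T)^theta
   turns a finite moment of 1 + T into an exponential tail for c. *)

section \<open>Frobenius norm and conjugate transpose\<close>

lemma norm_vec_power2: "(norm x)\<^sup>2 = (\<Sum>i\<in>UNIV. (norm (x $ i))\<^sup>2)"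
  for x :: "'a::real_normed_vector^'n"
  by (simp add: norm_vec_def L2_set_def sum_nonneg)

lemma norm_matrix_vector_mult_le: "norm (B *v x) \<le> norm B * norm x"
  for B :: "complex^'n^'m"
proof -
  have row: "cmod ((B *v x) $ i) \<le> norm (B $ i) * norm x" for i
  proof -
    have "cmod ((B *v x) $ i) = cmod (\<Sum>j\<in>UNIV. B $ i $ j * x $ j)"
      by (simp add: matrix_vector_mult_def)
    also have "\<dots> \<le> (\<Sum>j\<in>UNIV. \<bar>cmod (B $ i $ j)\<bar> * \<bar>cmod (x $ j)\<bar>)"
      by (rule order_trans[OF norm_sum]) (simp add: norm_mult)
    also have "\<dots> \<le> L2_set (\<lambda>j. cmod (B $ i $ j)) UNIV * L2_set (\<lambda>j. cmod (x $ j)) UNIV"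
      by (rule L2_set_mult_ineq)
    finally show ?thesis by (simp add: norm_vec_def)
  qed
  have "(norm (B *v x))\<^sup>2 \<le> (\<Sum>i\<in>UNIV. (norm (B $ i) * norm x)\<^sup>2)"
    unfolding norm_vec_power2[of "B *v x"] by (intro sum_mono power_mono row) simp
  also have "\<dots> = (norm B * norm x)\<^sup>2"
    by (simp add: power_mult_distrib sum_distrib_right norm_vec_power2[of B])
  finally show ?thesis by (rule power2_le_imp_le) simp
qed

lemma norm_transpose: "norm (transpose A) = norm A"
  for A :: "complex^'n^'m"
proof -
  have "(norm (transpose A))\<^sup>2 = (norm A)\<^sup>2"
    unfolding norm_vec_power2[of "transpose A"] norm_vec_power2[of A]
    by (simp add: norm_vec_power2[where 'a=complex] transpose_def) (rule sum.swap)
  then show ?thesis by (simp add: power2_eq_iff_nonneg)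
qed

lemma norm_matrix_mult_le: "norm (A ** B) \<le> norm A * norm B"
  for A :: "complex^'k^'m" and B :: "complex^'n^'k"
proof -
  have row: "(A ** B) $ i = transpose B *v (A $ i)" for i
    by (simp add: vec_eq_iff matrix_matrix_mult_def matrix_vector_mult_def transpose_def mult.commute)
  have "norm (transpose B *v x) \<le> norm B * norm x" for x
    using norm_matrix_vector_mult_le[of "transpose B"] by (simp only: norm_transpose)
  then have "(norm (A ** B))\<^sup>2 \<le> (\<Sum>i\<in>UNIV. (norm B * norm (A $ i))\<^sup>2)"
    unfolding norm_vec_power2[of "A ** B"] row by (intro sum_mono power_mono) simp_all
  also have "\<dots> = (norm A * norm B)\<^sup>2"
    by (simp add: power_mult_distrib sum_distrib_left norm_vec_power2[of A] mult.commute)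
  finally show ?thesis by (rule power2_le_imp_le) simp
qed

lemma complex_matrix_vector_mult_scaleR: "A *v (r *\<^sub>R x) = r *\<^sub>R (A *v x)"
  for A :: "complex^'n^'m"
  by (simp add: vec_eq_iff matrix_vector_mult_def) (simp add: scaleR_conv_of_real sum_distrib_left mult_ac)

lemma Re_trace_add: "Re (trace (A + B)) = Re (trace A) + Re (trace B)"
  for A :: "complex^'n^'n"
  by (simp add: trace_add)

lemma Re_trace_scaleR: "Re (trace (r *\<^sub>R A)) = r * Re (trace A)"
  for A :: "complex^'n^'n"
  by (simp add: trace_def sum_distrib_left)

lemma ctrans_ctrans [simp]: "ctrans (ctrans A) = A"
  by (simp add: ctrans_def vec_eq_iff)

lemma ctrans_matrix_mult: "ctrans (A ** B) = ctrans B ** ctrans A"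
  by (simp add: ctrans_def matrix_matrix_mult_def vec_eq_iff mult.commute)

lemma ctrans_mat_1 [simp]: "ctrans (mat 1 :: complex^'n^'n) = mat 1"
  by (simp add: ctrans_def vec_eq_iff mat_def)

lemma ctrans_diff: "ctrans (A - B) = ctrans A - ctrans B"
  by (simp add: ctrans_def vec_eq_iff)

lemma norm_ctrans: "norm (ctrans A) = norm A"
  for A :: "complex^'n^'m"
proof -
  have "(norm (ctrans A))\<^sup>2 = (norm A)\<^sup>2"
    unfolding norm_vec_power2[of "ctrans A"] norm_vec_power2[of A]
    by (simp add: norm_vec_power2[where 'a=complex] ctrans_def) (rule sum.swap)
  then show ?thesis by (simp add: power2_eq_iff_nonneg)
qed

lemma inner_matrix_vector_mult_ctrans: "inner (A *v u) w = inner u (ctrans A *v w)"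
  for A :: "complex^'n^'m"
proof -
  have inner_Re: "inner z z' = Re (z * cnj z')" for z z' :: complex
    by (simp add: inner_complex_def)
  have "inner (A *v u) w = (\<Sum>i\<in>UNIV. \<Sum>j\<in>UNIV. Re (A $ i $ j * u $ j * cnj (w $ i)))"
    by (simp add: inner_vec_def matrix_vector_mult_def inner_Re sum_distrib_right Re_sum)
  also have "\<dots> = (\<Sum>j\<in>UNIV. \<Sum>i\<in>UNIV. Re (A $ i $ j * u $ j * cnj (w $ i)))"
    by (rule sum.swap)
  also have "\<dots> = inner u (ctrans A *v w)"
    by (simp add: inner_vec_def matrix_vector_mult_def inner_Re sum_distrib_left
        Re_sum ctrans_def mult_ac)
  finally show ?thesis .
qed

lemma inner_mult_ctrans: "inner ((ctrans A ** A) *v u) w = inner (A *v u) (A *v w)"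
  for A :: "complex^'n^'m"
  by (simp add: matrix_vector_mul_assoc[symmetric] inner_matrix_vector_mult_ctrans)

lemma Re_trace_mult_ctrans: "Re (trace (A ** ctrans A)) = (norm A)\<^sup>2"
  for A :: "complex^'n^'m"
proof -
  have "Re (trace (A ** ctrans A)) = (\<Sum>i\<in>UNIV. \<Sum>k\<in>UNIV. (cmod (A $ i $ k))\<^sup>2)"
    by (simp add: trace_def matrix_matrix_mult_def ctrans_def Re_sum complex_norm_square[symmetric]
        del: Re_complex_of_real) simp
  also have "\<dots> = (norm A)\<^sup>2"
    by (simp add: norm_vec_power2[of A] norm_vec_power2[where 'a=complex])
  finally show ?thesis .
qed

section \<open>The largest eigenvalue of a Gram matrix\<close>

definition opnorm :: "complex^'n^'m \<Rightarrow> real" where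
  "opnorm A = (SUP u\<in>sphere 0 1. norm (A *v u))"

lemma opnorm_attained:
  fixes A :: "complex^'n^'m"
  shows "\<exists>u. norm u = 1 \<and> norm (A *v u) = opnorm A"
proof -
  have "continuous_on (sphere 0 1) (\<lambda>u. norm (A *v u))"
    by (intro continuous_intros linear_continuous_on matrix_vector_mul_bounded_linear)
  moreover have "sphere (0::complex^'n) 1 \<noteq> {}" by simp
  ultimately obtain u where u: "u \<in> sphere 0 1" "\<forall>v\<in>sphere 0 1. norm (A *v v) \<le> norm (A *v u)"
    using continuous_attains_sup[OF compact_sphere] by blast
  have "opnorm A = norm (A *v u)"
    unfolding opnorm_def by (rule cSup_eq_maximum) (use u in auto)
  with u show ?thesis by auto
qed

lemma norm_matrix_vector_mult_le_opnorm: "norm (A *v x) \<le> opnorm A * norm x"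
proof (cases "x = 0")
  case True
  then show ?thesis by simp
next
  case False
  have bdd: "bdd_above ((\<lambda>u. norm (A *v u)) ` sphere 0 1)"
    using norm_matrix_vector_mult_le[of A]
    by (intro bdd_aboveI2[where M = "norm A"]) (metis mem_sphere_0 mult.right_neutral)
  have "norm (A *v ((1 / norm x) *\<^sub>R x)) \<le> opnorm A"
    unfolding opnorm_def using False by (intro cSUP_upper bdd) simp
  then show ?thesis
    using False by (simp add: complex_matrix_vector_mult_scaleR field_simps)
qed

lemma power2_norm_matrix_vector_mult_le_opnorm: "(norm (A *v x))\<^sup>2 \<le> (opnorm A)\<^sup>2 * (norm x)\<^sup>2"
  using norm_matrix_vector_mult_le_opnorm[of A x]
  by (simp add: power_mult_distrib[symmetric] power_mono)

lemma opnorm_nonneg: "0 \<le> opnorm A"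
  using opnorm_attained[of A] by (metis norm_ge_zero)

lemma opnorm_le_norm: "opnorm A \<le> norm A"
proof -
  obtain u where "norm u = 1" "norm (A *v u) = opnorm A"
    using opnorm_attained by blast
  then show ?thesis using norm_matrix_vector_mult_le[of A u] by simp
qed

lemma opnorm_le_add_norm_diff: "opnorm A \<le> opnorm B + norm (A - B)"
proof -
  obtain u where u: "norm u = 1" "norm (A *v u) = opnorm A"
    using opnorm_attained by blast
  have "A *v u = B *v u + (A - B) *v u"
    by (simp add: matrix_vector_mult_diff_rdistrib)
  then have "norm (A *v u) \<le> norm (B *v u) + norm ((A - B) *v u)"
    by (metis norm_triangle_ineq)
  also have "\<dots> \<le> opnorm B + norm (A - B)"
    using norm_matrix_vector_mult_le_opnorm[of B u] norm_matrix_vector_mult_le[of "A - B" u] u(1)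
    by simp
  finally show ?thesis using u(2) by simp
qed

lemma linear_coeff_zero_if_quadratic_nonpos:
  fixes d e :: real
  assumes "\<And>t. 2 * t * d + t\<^sup>2 * e \<le> 0"
  shows "d = 0"
proof (rule ccontr)
  assume "d \<noteq> 0"
  define k where "k = \<bar>e\<bar> + 1"
  have "k > 0" by (simp add: k_def)
  have "2 * (d / k) * d + (d / k)\<^sup>2 * e = d\<^sup>2 * (2 * k + e) / k\<^sup>2"
    using \<open>k > 0\<close> by (simp add: field_simps power2_eq_square)
  also have "\<dots> > 0"
    using \<open>d \<noteq> 0\<close> \<open>k > 0\<close> by (intro divide_pos_pos mult_pos_pos) (auto simp: k_def abs_if)
  finally show False using assms[of "d / k"] by simp
qed

lemma norm_add_scaleR_power2:
  "(norm (a + t *\<^sub>R b))\<^sup>2 = (norm a)\<^sup>2 + 2 * t * inner a b + t\<^sup>2 * (norm b)\<^sup>2"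
  for a b :: "'a::real_inner"
  unfolding power2_norm_eq_inner
  by (simp add: inner_add_left inner_add_right inner_commute power2_eq_square algebra_simps)

text \<open>A unit vector at which \<open>\<parallel>A\<^sup>* u\<parallel>\<close> is maximal is an eigenvector of \<open>A A\<^sup>*\<close>:
  the quadratic form \<open>\<parallel>A\<^sup>* v\<parallel>\<^sup>2 - \<parallel>A\<^sup>*\<parallel>\<^sup>2 \<parallel>v\<parallel>\<^sup>2\<close> is maximal at \<open>u\<close>, so its derivative
  there, \<open>2 (A A\<^sup>* u - \<parallel>A\<^sup>*\<parallel>\<^sup>2 u)\<close>, vanishes.\<close>
lemma opnorm_maximizer_eigenvector:
  fixes A :: "complex^'n^'m"
  assumes u: "norm u = 1" "norm (ctrans A *v u) = opnorm (ctrans A)"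
  shows "(A ** ctrans A) *v u = (opnorm (ctrans A))\<^sup>2 *\<^sub>R u"
proof -
  let ?B = "ctrans A" and ?m = "(opnorm (ctrans A))\<^sup>2"
  have bound: "(norm (?B *v v))\<^sup>2 \<le> ?m * (norm v)\<^sup>2" for v
    using power2_norm_matrix_vector_mult_le_opnorm[of ?B v] .
  have "inner (?B *v u) (?B *v w) - ?m * inner u w = 0" for w
  proof (rule linear_coeff_zero_if_quadratic_nonpos)
    fix t :: real
    have "?B *v (u + t *\<^sub>R w) = ?B *v u + t *\<^sub>R (?B *v w)"
      by (simp add: matrix_vector_right_distrib complex_matrix_vector_mult_scaleR)
    then have "?m + 2 * t * inner (?B *v u) (?B *v w) + t\<^sup>2 * (norm (?B *v w))\<^sup>2
        \<le> ?m * (1 + 2 * t * inner u w + t\<^sup>2 * (norm w)\<^sup>2)"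
      using bound[of "u + t *\<^sub>R w"] u by (simp only: norm_add_scaleR_power2) simp
    moreover have "t\<^sup>2 * (norm (?B *v w))\<^sup>2 \<le> t\<^sup>2 * (?m * (norm w)\<^sup>2)"
      using bound[of w] by (simp add: mult_left_mono)
    ultimately show "2 * t * (inner (?B *v u) (?B *v w) - ?m * inner u w)
        + t\<^sup>2 * ((norm (?B *v w))\<^sup>2 - ?m * (norm w)\<^sup>2) \<le> 0"
      by (simp add: algebra_simps)
  qed
  then have "inner ((A ** ctrans A) *v u - ?m *\<^sub>R u) w = 0" for w
    using inner_mult_ctrans[of ?B] by (simp add: inner_diff_left)
  from this[of "(A ** ctrans A) *v u - ?m *\<^sub>R u"] show ?thesis by simp
qed

lemma of_real_vector_scalar_mult: "complex_of_real r *s v = r *\<^sub>R v"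
  by (simp add: vec_eq_iff) (simp add: scaleR_conv_of_real)

lemma eigenvalue_mult_ctrans_le:
  fixes A :: "complex^'n^'m"
  assumes "(A ** ctrans A) *v v = complex_of_real \<mu> *s v" "v \<noteq> 0"
  shows "\<mu> \<le> (opnorm (ctrans A))\<^sup>2"
proof -
  have "\<mu> * (norm v)\<^sup>2 = inner ((A ** ctrans A) *v v) v"
    using assms(1) by (simp add: of_real_vector_scalar_mult power2_norm_eq_inner)
  also have "\<dots> = (norm (ctrans A *v v))\<^sup>2"
    using inner_mult_ctrans[of "ctrans A"] by (simp add: power2_norm_eq_inner)
  also have "\<dots> \<le> (opnorm (ctrans A))\<^sup>2 * (norm v)\<^sup>2"
    by (rule power2_norm_matrix_vector_mult_le_opnorm)
  finally show ?thesis using assms(2) by simp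
qed

lemma eigenvectors_mult_ctrans_orthogonal:
  fixes A :: "complex^'n^'m"
  assumes "(A ** ctrans A) *v v = complex_of_real \<mu> *s v"
    and "(A ** ctrans A) *v w = complex_of_real \<nu> *s w" and "\<mu> \<noteq> \<nu>"
  shows "inner v w = 0"
proof -
  have "inner ((A ** ctrans A) *v v) w = inner ((A ** ctrans A) *v w) v"
    using inner_mult_ctrans[of "ctrans A"] by (simp add: inner_commute)
  then have "\<mu> * inner v w = \<nu> * inner v w"
    using assms(1,2) by (simp add: of_real_vector_scalar_mult inner_commute)
  then show ?thesis using assms(3) by simp
qed

text \<open>Eigenvectors for distinct eigenvalues are orthogonal, hence linearly independent.\<close>
lemma finite_real_eigenvalues_mult_ctrans:
  fixes A :: "complex^'n^'m"
  shows "finite {\<mu>::real. eigenvalue (A ** ctrans A) (complex_of_real \<mu>)}" (is "finite ?E")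
proof -
  define vec where
    "vec \<mu> = (SOME v. v \<noteq> 0 \<and> (A ** ctrans A) *v v = complex_of_real \<mu> *s v)" for \<mu>
  have vec: "vec \<mu> \<noteq> 0 \<and> (A ** ctrans A) *v vec \<mu> = complex_of_real \<mu> *s vec \<mu>"
    if "\<mu> \<in> ?E" for \<mu>
    using that unfolding vec_def eigenvalue_def mem_Collect_eq by (rule someI_ex)
  have orth: "inner (vec \<mu>) (vec \<nu>) = 0" if "\<mu> \<in> ?E" "\<nu> \<in> ?E" "\<mu> \<noteq> \<nu>" for \<mu> \<nu>
    using that vec eigenvectors_mult_ctrans_orthogonal by blast
  have "inj_on vec ?E"
    using orth vec by (intro inj_onI) (metis inner_eq_zero_iff)
  moreover have "pairwise orthogonal (vec ` ?E)"
    unfolding pairwise_def orthogonal_def using orth by blast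
  then have "independent (vec ` ?E)"
    by (rule pairwise_orthogonal_independent) (use vec in fastforce)
  then have "finite (vec ` ?E)" by (rule independent_imp_finite)
  ultimately show ?thesis by (rule finite_imageD[rotated])
qed

lemma lambda_max_mult_ctrans: "lambda_max (A ** ctrans A) = (opnorm (ctrans A))\<^sup>2"
  for A :: "complex^'n^'m"
proof -
  obtain u where u: "norm u = 1" "norm (ctrans A *v u) = opnorm (ctrans A)"
    using opnorm_attained by blast
  have "(A ** ctrans A) *v u = complex_of_real ((opnorm (ctrans A))\<^sup>2) *s u"
    by (simp only: of_real_vector_scalar_mult opnorm_maximizer_eigenvector[OF u])
  then have "(opnorm (ctrans A))\<^sup>2 \<in> {\<mu>. eigenvalue (A ** ctrans A) (complex_of_real \<mu>)}"
    unfolding eigenvalue_def mem_Collect_eq using u(1)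
    by (intro exI[of _ u]) (auto simp del: of_real_power)
  then show ?thesis
    unfolding lambda_max_def
    by (intro Max_eqI finite_real_eigenvalues_mult_ctrans)
      (auto simp: eigenvalue_def intro: eigenvalue_mult_ctrans_le)
qed

lemma lambda_max_mult_ctrans_nonneg: "0 \<le> lambda_max (A ** ctrans A)"
  by (simp add: lambda_max_mult_ctrans)

lemma lambda_max_mult_ctrans_le_trace:
  "lambda_max (A ** ctrans A) \<le> Re (trace (A ** ctrans A))"
  unfolding lambda_max_mult_ctrans Re_trace_mult_ctrans
  using opnorm_le_norm[of "ctrans A"] opnorm_nonneg[of "ctrans A"]
  by (simp add: norm_ctrans power_mono)

lemma trace_mult_ctrans_le_card_lambda_max:
  "Re (trace (A ** ctrans A)) \<le> real CARD('m) * lambda_max (A ** ctrans A)"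
  for A :: "complex^'n^'m"
proof -
  let ?B = "ctrans A"
  have col: "(?B *v axis j 1) $ k = ?B $ k $ j" for j k
    by (simp add: matrix_vector_mult_def axis_def if_distrib cong: if_cong)
  have unit: "norm (axis j (1::complex)) = 1" for j :: 'm
  proof -
    have eq: "(\<lambda>i. (cmod (axis j (1::complex) $ i))\<^sup>2) = (\<lambda>i. if i = j then 1 else 0)"
      by (auto simp: axis_def)
    show ?thesis unfolding norm_vec_def L2_set_def eq by simp
  qed
  have "Re (trace (A ** ctrans A)) = (norm ?B)\<^sup>2"
    by (simp add: Re_trace_mult_ctrans norm_ctrans)
  also have "\<dots> = (\<Sum>k\<in>UNIV. \<Sum>j\<in>UNIV. (cmod (?B $ k $ j))\<^sup>2)"
    by (simp add: norm_vec_power2[of ?B] norm_vec_power2[where 'a=complex])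
  also have "\<dots> = (\<Sum>j\<in>UNIV. \<Sum>k\<in>UNIV. (cmod (?B $ k $ j))\<^sup>2)"
    by (rule sum.swap)
  also have "\<dots> = (\<Sum>j\<in>UNIV. (norm (?B *v axis j 1))\<^sup>2)"
    by (simp add: norm_vec_power2[where 'a=complex] col)
  also have "\<dots> \<le> (\<Sum>j\<in>(UNIV::'m set). (opnorm ?B)\<^sup>2)"
    using norm_matrix_vector_mult_le_opnorm[of ?B "axis _ 1"] unit by (intro sum_mono power_mono) simp_all
  finally show ?thesis by (simp add: lambda_max_mult_ctrans)
qed

lemma continuous_on_lambda_max_mult_ctrans:
  "continuous_on UNIV (\<lambda>A::complex^'n^'m. lambda_max (A ** ctrans A))"
proof -
  have "1-lipschitz_on UNIV (\<lambda>A::complex^'n^'m. opnorm (ctrans A))"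
  proof (rule lipschitz_onI)
    fix A B :: "complex^'n^'m"
    have "norm (ctrans A - ctrans B) = dist A B" "norm (ctrans B - ctrans A) = dist A B"
      by (simp_all add: ctrans_diff[symmetric] norm_ctrans dist_norm norm_minus_commute)
    then show "dist (opnorm (ctrans A)) (opnorm (ctrans B)) \<le> 1 * dist A B"
      using opnorm_le_add_norm_diff[of "ctrans A" "ctrans B"]
        opnorm_le_add_norm_diff[of "ctrans B" "ctrans A"]
      by (simp add: dist_real_def abs_le_iff)
  qed simp
  then have "continuous_on UNIV (\<lambda>A::complex^'n^'m. opnorm (ctrans A))"
    by (rule lipschitz_on_continuous_on)
  then show ?thesis
    unfolding lambda_max_mult_ctrans by (intro continuous_intros)
qed

section \<open>Traces of matrix powers and of the matrix exponential\<close>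

lemma matpow_add: "matpow A (k + l) = matpow A k ** matpow A l"
  by (induction k) (simp_all add: matrix_mul_assoc)

lemma matpow_commute: "matpow A k ** A = A ** matpow A k"
  by (induction k) (simp_all add: matrix_mul_assoc[symmetric])

lemma matpow_scaleR: "matpow (r *\<^sub>R A) k = r ^ k *\<^sub>R matpow A k"
  by (induction k) (simp_all add: matrix_scalar_ac scalar_matrix_assoc[symmetric])

lemma ctrans_matpow: "ctrans A = A \<Longrightarrow> ctrans (matpow A k) = matpow A k"
  by (induction k) (simp_all add: ctrans_matrix_mult matpow_commute)

lemma matpow_eigenvector: "A *v u = r *\<^sub>R u \<Longrightarrow> matpow A k *v u = r ^ k *\<^sub>R u"
  by (induction k) (simp_all add: matrix_vector_mul_assoc[symmetric] complex_matrix_vector_mult_scaleR)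

lemma norm_matpow_le: "norm (matpow A k) \<le> norm (mat 1 :: complex^'n^'n) * norm A ^ k"
  for A :: "complex^'n^'n"
proof (induction k)
  case (Suc k)
  have "norm (matpow A (Suc k)) \<le> norm A * norm (matpow A k)"
    by (simp add: norm_matrix_mult_le)
  also have "\<dots> \<le> norm A * (norm (mat 1 :: complex^'n^'n) * norm A ^ k)"
    by (intro mult_left_mono Suc.IH) simp
  finally show ?case by (simp add: mult_ac)
qed simp

lemma summable_mexp: "summable (\<lambda>k. (1 / fact k) *\<^sub>R matpow A k)"
  for A :: "complex^'n^'n"
proof (rule summable_comparison_test')
  show "summable (\<lambda>k. norm (mat 1 :: complex^'n^'n) * (inverse (fact k) * norm A ^ k))"
    by (intro summable_mult summable_exp)
  show "norm ((1 / fact k) *\<^sub>R matpow A k)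
      \<le> norm (mat 1 :: complex^'n^'n) * (inverse (fact k) * norm A ^ k)" for k
    using norm_matpow_le[of A k] by (simp add: field_simps divide_right_mono)
qed

lemma sums_Re_trace_mexp:
  "(\<lambda>k. s ^ k / fact k * Re (trace (matpow A k))) sums Re (trace (mexp (s *\<^sub>R A)))"
  for A :: "complex^'n^'n"
proof -
  have "bounded_linear (\<lambda>B::complex^'n^'n. Re (trace B))"
    by (rule linear_conv_bounded_linear[THEN iffD1], rule linearI)
      (simp_all add: Re_trace_add Re_trace_scaleR)
  from bounded_linear.sums[OF this summable_sums[OF summable_mexp[of "s *\<^sub>R A"]]]
  show ?thesis
    by (simp add: mexp_def matpow_scaleR Re_trace_scaleR)
qed

lemma inner_le_Re_trace_ctrans_mult:
  fixes A :: "complex^'n^'m"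
  assumes "norm u = 1"
  shows "inner ((ctrans A ** A) *v u) u \<le> Re (trace (ctrans A ** A))"
proof -
  have "inner ((ctrans A ** A) *v u) u = (norm (A *v u))\<^sup>2"
    by (simp add: inner_mult_ctrans power2_norm_eq_inner)
  also have "\<dots> \<le> (norm A)\<^sup>2"
    using norm_matrix_vector_mult_le[of A u] assms by (simp add: power_mono)
  also have "\<dots> = Re (trace (ctrans A ** A))"
    using Re_trace_mult_ctrans[of "ctrans A"] by (simp add: norm_ctrans)
  finally show ?thesis .
qed

text \<open>Every power of \<open>G = A A\<^sup>*\<close> has the form \<open>B\<^sup>* B\<close>: take \<open>B = G\<^sup>j\<close> for \<open>G\<^sup>2\<^sup>j\<close> and
  \<open>B = A\<^sup>* G\<^sup>j\<close> for \<open>G\<^sup>2\<^sup>j\<^sup>+\<^sup>1\<close>.\<close>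
lemma inner_le_Re_trace_matpow_mult_ctrans:
  fixes A :: "complex^'n^'m"
  assumes "norm u = 1"
  shows "inner (matpow (A ** ctrans A) k *v u) u \<le> Re (trace (matpow (A ** ctrans A) k))"
proof -
  let ?G = "A ** ctrans A"
  have herm: "ctrans ?G = ?G" by (simp add: ctrans_matrix_mult)
  have "\<exists>j. k = j + j \<or> k = j + (1 + j)" by presburger
  then obtain j where "k = j + j \<or> k = j + (1 + j)" by blast
  then show ?thesis
  proof
    assume "k = j + j"
    then have "matpow ?G k = ctrans (matpow ?G j) ** matpow ?G j"
      by (simp add: matpow_add ctrans_matpow[OF herm])
    then show ?thesis using inner_le_Re_trace_ctrans_mult[OF assms] by simp
  next
    assume k: "k = j + (1 + j)"
    have "matpow ?G k = matpow ?G j ** matpow ?G (Suc j)"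
      unfolding k matpow_add[symmetric] by simp
    also have "\<dots> = ctrans (ctrans A ** matpow ?G j) ** (ctrans A ** matpow ?G j)"
      by (simp add: ctrans_matpow[OF herm] ctrans_matrix_mult matrix_mul_assoc)
    finally have "matpow ?G k = ctrans (ctrans A ** matpow ?G j) ** (ctrans A ** matpow ?G j)" .
    then show ?thesis using inner_le_Re_trace_ctrans_mult[OF assms] by simp
  qed
qed

lemma lambda_max_power_le_Re_trace_matpow:
  "lambda_max (A ** ctrans A) ^ k \<le> Re (trace (matpow (A ** ctrans A) k))"
  for A :: "complex^'n^'m"
proof -
  obtain u where u: "norm u = 1" "norm (ctrans A *v u) = opnorm (ctrans A)"
    using opnorm_attained by blast
  have "matpow (A ** ctrans A) k *v u = lambda_max (A ** ctrans A) ^ k *\<^sub>R u"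
    unfolding lambda_max_mult_ctrans by (rule matpow_eigenvector[OF opnorm_maximizer_eigenvector[OF u]])
  then have "inner (matpow (A ** ctrans A) k *v u) u = lambda_max (A ** ctrans A) ^ k"
    using u(1) by (simp add: power2_norm_eq_inner[symmetric])
  then show ?thesis
    using inner_le_Re_trace_matpow_mult_ctrans[OF u(1), of A k] by simp
qed

lemma exp_lambda_max_le_Re_trace_mexp:
  fixes A :: "complex^'n^'m"
  assumes "0 \<le> s"
  shows "exp (s * lambda_max (A ** ctrans A)) \<le> Re (trace (mexp (s *\<^sub>R (A ** ctrans A))))"
proof -
  have "(\<lambda>k. (s * lambda_max (A ** ctrans A)) ^ k / fact k) sums exp (s * lambda_max (A ** ctrans A))"
    using exp_converges[of "s * lambda_max (A ** ctrans A)"] by (simp add: divide_inverse mult.commute)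
  then show ?thesis
    using sums_Re_trace_mexp
  proof (rule sums_le[rotated])
    show "(s * lambda_max (A ** ctrans A)) ^ k / fact k
        \<le> s ^ k / fact k * Re (trace (matpow (A ** ctrans A) k))" for k
      using lambda_max_power_le_Re_trace_matpow[of A k] assms
      by (simp add: power_mult_distrib divide_right_mono mult_left_mono)
  qed
qed

lemma card_add_trace_le_Re_trace_mexp:
  fixes A :: "complex^'n^'m"
  assumes "0 \<le> s"
  shows "real CARD('m) + s * Re (trace (A ** ctrans A)) \<le> Re (trace (mexp (s *\<^sub>R (A ** ctrans A))))"
proof -
  let ?f = "\<lambda>k. s ^ k / fact k * Re (trace (matpow (A ** ctrans A) k))"
  have "0 \<le> ?f k" for k
  proof -
    have "0 \<le> lambda_max (A ** ctrans A) ^ k"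
      by (simp add: lambda_max_mult_ctrans_nonneg)
    then have "0 \<le> Re (trace (matpow (A ** ctrans A) k))"
      using lambda_max_power_le_Re_trace_matpow by (rule order_trans)
    then show ?thesis using assms by simp
  qed
  then have "(\<Sum>k<2. ?f k) \<le> suminf ?f"
    using sums_Re_trace_mexp by (intro sum_le_suminf) (auto simp: sums_iff)
  then show ?thesis
    using sums_Re_trace_mexp[of s "A ** ctrans A"]
    by (simp add: numeral_2_eq_2 trace_I sums_iff)
qed

section \<open>A determinant bound\<close>

lemma norm_det_le:
  fixes B :: "complex^'n^'n"
  assumes "\<And>i j. cmod (B $ i $ j) \<le> b"
  shows "cmod (det B) \<le> fact CARD('n) * b ^ CARD('n)"
proof -
  let ?P = "{q. q permutes (UNIV::'n set)}"
  have "cmod (det B) \<le> (\<Sum>q\<in>?P. cmod (of_int (sign q) * (\<Prod>i\<in>UNIV. B $ i $ q i)))"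
    unfolding det_def by (rule norm_sum)
  also have "\<dots> \<le> (\<Sum>q\<in>?P. b ^ CARD('n))"
  proof (rule sum_mono)
    fix q :: "'n \<Rightarrow> 'n"
    have "(\<Prod>i\<in>UNIV. cmod (B $ i $ q i)) \<le> (\<Prod>i\<in>(UNIV::'n set). b)"
      by (intro prod_mono) (simp add: assms)
    moreover have "cmod (of_int (sign q)) = 1" by (cases q rule: sign_cases) simp_all
    ultimately show "cmod (of_int (sign q) * (\<Prod>i\<in>UNIV. B $ i $ q i)) \<le> b ^ CARD('n)"
      by (simp add: norm_mult prod_norm[symmetric])
  qed
  also have "\<dots> = fact CARD('n) * b ^ CARD('n)"
    by (simp add: card_permutations)
  finally show ?thesis .
qed

lemma norm_mult_ctrans_entry_le: "cmod ((A ** ctrans A) $ i $ j) \<le> (norm A)\<^sup>2"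
  for A :: "complex^'n^'m"
proof -
  have row: "norm (A $ l) \<le> norm A" for l
    unfolding norm_vec_def by (rule member_le_L2_set) simp_all
  have "cmod ((A ** ctrans A) $ i $ j) = cmod (\<Sum>k\<in>UNIV. A $ i $ k * cnj (A $ j $ k))"
    by (simp add: matrix_matrix_mult_def ctrans_def)
  also have "\<dots> \<le> (\<Sum>k\<in>UNIV. \<bar>cmod (A $ i $ k)\<bar> * \<bar>cmod (A $ j $ k)\<bar>)"
    by (rule order_trans[OF norm_sum]) (simp add: norm_mult)
  also have "\<dots> \<le> L2_set (\<lambda>k. cmod (A $ i $ k)) UNIV * L2_set (\<lambda>k. cmod (A $ j $ k)) UNIV"
    by (rule L2_set_mult_ineq)
  also have "\<dots> = norm (A $ i) * norm (A $ j)" by (simp add: norm_vec_def)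
  also have "\<dots> \<le> norm A * norm A"
    using row[of i] row[of j] by (intro mult_mono) simp_all
  finally show ?thesis by (simp add: power2_eq_square)
qed

text \<open>No sign condition on the determinant is needed: for real \<open>x\<close>, \<open>ln x = ln \<bar>x\<bar>\<close> if
  \<open>x \<noteq> 0\<close>, and \<open>ln 0 = 0\<close>.\<close>
lemma ln_det_identity_add_le:
  fixes A :: "complex^'n^'m"
  assumes "0 \<le> a"
  shows "ln (Re (det (mat 1 + a *\<^sub>R (A ** ctrans A))))
    \<le> ln (fact CARD('m)) + CARD('m) * ln (1 + a * Re (trace (A ** ctrans A)))"
proof -
  define d where "d = det (mat 1 + a *\<^sub>R (A ** ctrans A))"
  define t where "t = Re (trace (A ** ctrans A))"
  have t: "t = (norm A)\<^sup>2" by (simp add: t_def Re_trace_mult_ctrans)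
  have entry: "cmod ((mat 1 + a *\<^sub>R (A ** ctrans A)) $ i $ j) \<le> 1 + a * t" for i j
  proof -
    have "cmod ((mat 1 + a *\<^sub>R (A ** ctrans A)) $ i $ j)
        \<le> cmod ((mat 1 :: complex^'m^'m) $ i $ j) + cmod (a *\<^sub>R (A ** ctrans A) $ i $ j)"
      by (simp only: vector_add_component vector_scaleR_component) (rule norm_triangle_ineq)
    also have "\<dots> = cmod ((mat 1 :: complex^'m^'m) $ i $ j) + a * cmod ((A ** ctrans A) $ i $ j)"
      using assms by simp
    also have "\<dots> \<le> 1 + a * t"
      using norm_mult_ctrans_entry_le[of A i j] assms
      by (intro add_mono mult_left_mono) (simp_all add: mat_def t)
    finally show ?thesis .
  qed
  have pos: "0 < 1 + a * t" using assms by (simp add: t add_pos_nonneg)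
  show ?thesis
  proof (cases "Re d = 0")
    case True
    have "0 \<le> ln (fact CARD('m) :: real)" by (simp add: ln_ge_zero)
    moreover have "0 \<le> ln (1 + a * t)" using assms by (simp add: t ln_ge_zero)
    ultimately show ?thesis using True by (simp add: d_def flip: t_def)
  next
    case False
    have "\<bar>Re d\<bar> \<le> fact CARD('m) * (1 + a * t) ^ CARD('m)"
      using abs_Re_le_cmod[of d] norm_det_le[OF entry] unfolding d_def by linarith
    then have "ln \<bar>Re d\<bar> \<le> ln (fact CARD('m) * (1 + a * t) ^ CARD('m))"
      using False by simp
    moreover have "ln (Re d) = ln \<bar>Re d\<bar>"
      by (simp add: ln_real_def)
    ultimately show ?thesis
      using pos by (simp add: d_def t_def ln_mult ln_realpow)
  qed
qed

section \<open>Moment conditions and exponential tails\<close>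

definition powr_moment :: "'a measure \<Rightarrow> ('a \<Rightarrow> real) \<Rightarrow> bool" where
  "powr_moment M X \<longleftrightarrow> (\<exists>\<theta>>0. finite_exp M (\<lambda>\<omega>. X \<omega> powr \<theta>))"

definition exp_moment :: "'a measure \<Rightarrow> ('a \<Rightarrow> real) \<Rightarrow> bool" where
  "exp_moment M X \<longleftrightarrow> (\<exists>\<theta>>0. finite_exp M (\<lambda>\<omega>. exp (\<theta> * X \<omega>)))"

lemma finite_exp_mono:
  assumes "finite_exp M g" "\<And>\<omega>. \<omega> \<in> space M \<Longrightarrow> f \<omega> \<le> g \<omega>"
  shows "finite_exp M f"
proof -
  have "(\<integral>\<^sup>+ \<omega>. ennreal (f \<omega>) \<partial>M) \<le> (\<integral>\<^sup>+ \<omega>. ennreal (g \<omega>) \<partial>M)"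
    by (intro nn_integral_mono ennreal_leI assms(2))
  then show ?thesis
    using assms(1) unfolding finite_exp_def by (simp add: le_less_trans)
qed

lemma powr_moment_mono_powr:
  assumes "powr_moment M Y" "0 < r"
    and "\<And>\<omega>. \<omega> \<in> space M \<Longrightarrow> 0 \<le> X \<omega> \<and> 0 \<le> Y \<omega> \<and> X \<omega> \<le> Y \<omega> powr r"
  shows "powr_moment M X"
proof -
  obtain \<theta> where "\<theta> > 0" and fin: "finite_exp M (\<lambda>\<omega>. Y \<omega> powr \<theta>)"
    using assms(1) unfolding powr_moment_def by blast
  have "finite_exp M (\<lambda>\<omega>. X \<omega> powr (\<theta> / r))"
  proof (rule finite_exp_mono[OF fin])
    fix \<omega> assume "\<omega> \<in> space M"
    then have "X \<omega> powr (\<theta> / r) \<le> (Y \<omega> powr r) powr (\<theta> / r)"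
      using assms(3) \<open>\<theta> > 0\<close> \<open>0 < r\<close> by (intro powr_mono2) simp_all
    also have "\<dots> = Y \<omega> powr \<theta>"
      using \<open>0 < r\<close> by (simp add: powr_powr)
    finally show "X \<omega> powr (\<theta> / r) \<le> Y \<omega> powr \<theta>" .
  qed
  then show ?thesis
    unfolding powr_moment_def using \<open>\<theta> > 0\<close> \<open>0 < r\<close> by (intro exI[of _ "\<theta> / r"]) simp
qed

lemma powr_moment_mono:
  assumes "powr_moment M Y" "\<And>\<omega>. \<omega> \<in> space M \<Longrightarrow> 0 \<le> X \<omega> \<and> X \<omega> \<le> Y \<omega>"
  shows "powr_moment M X"
proof (rule powr_moment_mono_powr[OF assms(1), where r = 1])
  fix \<omega> assume "\<omega> \<in> space M"
  then show "0 \<le> X \<omega> \<and> 0 \<le> Y \<omega> \<and> X \<omega> \<le> Y \<omega> powr 1"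
    using assms(2) by fastforce
qed simp

lemma powr_moment_one_plus_scaled:
  assumes "powr_moment M (\<lambda>\<omega>. 1 + X \<omega>)" "0 < n"
    and "\<And>\<omega>. \<omega> \<in> space M \<Longrightarrow> 0 \<le> X \<omega> \<and> 0 \<le> Y \<omega> \<and> Y \<omega> \<le> real n * X \<omega>"
  shows "powr_moment M (\<lambda>\<omega>. 1 + Y \<omega>)"
proof (rule powr_moment_mono_powr[OF assms(1), where r = n])
  fix \<omega> assume "\<omega> \<in> space M"
  note XY = assms(3)[OF this]
  have "1 + Y \<omega> \<le> (1 + X \<omega>) ^ n"
    using Bernoulli_inequality[of "X \<omega>" n] XY by simp
  then show "0 \<le> 1 + Y \<omega> \<and> 0 \<le> 1 + X \<omega> \<and> 1 + Y \<omega> \<le> (1 + X \<omega>) powr real n"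
    using XY by (simp add: powr_realpow)
qed (use \<open>0 < n\<close> in simp)

lemma one_plus_powr_le:
  fixes x \<theta> :: real
  assumes "0 \<le> x" "0 < \<theta>"
  shows "(1 + x) powr \<theta> \<le> 2 powr \<theta> * (1 + x powr \<theta>)"
proof -
  have "(1 + x) powr \<theta> \<le> (2 * max 1 x) powr \<theta>"
    using assms by (intro powr_mono2) simp_all
  also have "\<dots> = 2 powr \<theta> * max 1 x powr \<theta>"
    using assms by (simp add: powr_mult)
  also have "max 1 x powr \<theta> \<le> 1 + x powr \<theta>"
    by (simp add: max_def)
  finally show ?thesis by simp
qed

lemma powr_moment_one_plus_iff:
  assumes "finite_measure M" "X \<in> borel_measurable M" "\<And>\<omega>. \<omega> \<in> space M \<Longrightarrow> 0 \<le> X \<omega>"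
  shows "powr_moment M (\<lambda>\<omega>. 1 + X \<omega>) \<longleftrightarrow> powr_moment M X"
proof
  assume "powr_moment M (\<lambda>\<omega>. 1 + X \<omega>)"
  then show "powr_moment M X"
    by (rule powr_moment_mono) (simp add: assms(3))
next
  assume "powr_moment M X"
  then obtain \<theta> where "\<theta> > 0" and fin: "finite_exp M (\<lambda>\<omega>. X \<omega> powr \<theta>)"
    unfolding powr_moment_def by blast
  interpret finite_measure M by fact
  have "ennreal ((1 + X \<omega>) powr \<theta>) \<le> ennreal (2 powr \<theta>) * (1 + ennreal (X \<omega> powr \<theta>))"
    if "\<omega> \<in> space M" for \<omega>
  proof -
    have "ennreal ((1 + X \<omega>) powr \<theta>) \<le> ennreal (2 powr \<theta> * (1 + X \<omega> powr \<theta>))"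
      using one_plus_powr_le[OF assms(3)[OF that] \<open>\<theta> > 0\<close>] by (rule ennreal_leI)
    then show ?thesis by (simp add: ennreal_mult ennreal_plus[symmetric])
  qed
  then have "(\<integral>\<^sup>+ \<omega>. ennreal ((1 + X \<omega>) powr \<theta>) \<partial>M)
      \<le> (\<integral>\<^sup>+ \<omega>. ennreal (2 powr \<theta>) * (1 + ennreal (X \<omega> powr \<theta>)) \<partial>M)"
    by (rule nn_integral_mono)
  also have "\<dots> = ennreal (2 powr \<theta>) * (emeasure M (space M) + (\<integral>\<^sup>+ \<omega>. ennreal (X \<omega> powr \<theta>) \<partial>M))"
    using assms(2) by (simp add: nn_integral_cmult nn_integral_add)
  also have "\<dots> < \<infinity>"
  proof -
    have "emeasure M (space M) + (\<integral>\<^sup>+ \<omega>. ennreal (X \<omega> powr \<theta>) \<partial>M) < \<infinity>"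
      using fin emeasure_finite[of "space M"] unfolding finite_exp_def by (simp add: less_top[symmetric])
    then show ?thesis by (simp add: ennreal_mult_less_top)
  qed
  finally show "powr_moment M (\<lambda>\<omega>. 1 + X \<omega>)"
    unfolding powr_moment_def finite_exp_def using \<open>\<theta> > 0\<close> by blast
qed

lemma exp_moment_mono_scaled:
  assumes "exp_moment M Y" "0 < k" "\<And>\<omega>. \<omega> \<in> space M \<Longrightarrow> X \<omega> \<le> k * Y \<omega>"
  shows "exp_moment M X"
proof -
  obtain \<theta> where "\<theta> > 0" and fin: "finite_exp M (\<lambda>\<omega>. exp (\<theta> * Y \<omega>))"
    using assms(1) unfolding exp_moment_def by blast
  have "finite_exp M (\<lambda>\<omega>. exp (\<theta> / k * X \<omega>))"
  proof (rule finite_exp_mono[OF fin])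
    fix \<omega> assume "\<omega> \<in> space M"
    then have "\<theta> / k * X \<omega> \<le> \<theta> / k * (k * Y \<omega>)"
      using assms \<open>\<theta> > 0\<close> by (intro mult_left_mono) simp_all
    then show "exp (\<theta> / k * X \<omega>) \<le> exp (\<theta> * Y \<omega>)"
      using \<open>0 < k\<close> by simp
  qed
  then show ?thesis
    unfolding exp_moment_def using \<open>\<theta> > 0\<close> \<open>0 < k\<close> by (intro exI[of _ "\<theta> / k"]) simp
qed

lemma exp_moment_imp_powr_moment_one_plus:
  assumes "exp_moment M X" "\<And>\<omega>. \<omega> \<in> space M \<Longrightarrow> 0 \<le> X \<omega>"
  shows "powr_moment M (\<lambda>\<omega>. 1 + X \<omega>)"
proof -
  obtain \<theta> where "\<theta> > 0" and fin: "finite_exp M (\<lambda>\<omega>. exp (\<theta> * X \<omega>))"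
    using assms(1) unfolding exp_moment_def by blast
  have "finite_exp M (\<lambda>\<omega>. (1 + X \<omega>) powr \<theta>)"
  proof (rule finite_exp_mono[OF fin])
    fix \<omega> assume "\<omega> \<in> space M"
    then have "(1 + X \<omega>) powr \<theta> \<le> exp (X \<omega>) powr \<theta>"
      using assms(2) \<open>\<theta> > 0\<close> by (intro powr_mono2 exp_ge_add_one_self) simp_all
    then show "(1 + X \<omega>) powr \<theta> \<le> exp (\<theta> * X \<omega>)"
      by (simp add: powr_def)
  qed
  then show ?thesis
    unfolding powr_moment_def using \<open>\<theta> > 0\<close> by blast
qed

lemma moment_conditions_comparable:
  assumes "finite_measure M" "X \<in> borel_measurable M" "0 < n"
    and XY: "\<And>\<omega>. \<omega> \<in> space M \<Longrightarrow> 0 \<le> X \<omega> \<and> X \<omega> \<le> Y \<omega> \<and> Y \<omega> \<le> real n * X \<omega>"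
  shows "powr_moment M (\<lambda>\<omega>. 1 + X \<omega>) \<longleftrightarrow> powr_moment M (\<lambda>\<omega>. 1 + Y \<omega>)"
    and "powr_moment M (\<lambda>\<omega>. 1 + X \<omega>) \<longleftrightarrow> powr_moment M X"
    and "exp_moment M X \<longleftrightarrow> exp_moment M Y"
    and "exp_moment M Y \<Longrightarrow> powr_moment M (\<lambda>\<omega>. 1 + Y \<omega>)"
proof -
  have nonneg: "0 \<le> X \<omega>" "0 \<le> Y \<omega>" if "\<omega> \<in> space M" for \<omega>
    using XY[OF that] by auto
  show "powr_moment M (\<lambda>\<omega>. 1 + X \<omega>) \<longleftrightarrow> powr_moment M (\<lambda>\<omega>. 1 + Y \<omega>)"
  proof
    assume "powr_moment M (\<lambda>\<omega>. 1 + X \<omega>)"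
    then show "powr_moment M (\<lambda>\<omega>. 1 + Y \<omega>)"
      by (rule powr_moment_one_plus_scaled[OF _ \<open>0 < n\<close>]) (use XY in force)
  next
    assume "powr_moment M (\<lambda>\<omega>. 1 + Y \<omega>)"
    then show "powr_moment M (\<lambda>\<omega>. 1 + X \<omega>)"
      by (rule powr_moment_mono) (use XY in force)
  qed
  show "powr_moment M (\<lambda>\<omega>. 1 + X \<omega>) \<longleftrightarrow> powr_moment M X"
    using assms(1,2) nonneg(1) by (rule powr_moment_one_plus_iff)
  show "exp_moment M X \<longleftrightarrow> exp_moment M Y"
  proof
    assume "exp_moment M X"
    then show "exp_moment M Y"
      by (rule exp_moment_mono_scaled[where k = n]) (use XY \<open>0 < n\<close> in auto)
  next
    assume "exp_moment M Y"
    then show "exp_moment M X"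
      by (rule exp_moment_mono_scaled[where k = 1]) (use XY in auto)
  qed
  show "exp_moment M Y \<Longrightarrow> powr_moment M (\<lambda>\<omega>. 1 + Y \<omega>)"
    by (erule exp_moment_imp_powr_moment_one_plus) (rule nonneg(2))
qed

text \<open>Markov's inequality, stated so that neither \<open>f\<close> nor \<open>S\<close> need be measurable:
  a non-measurable \<open>S\<close> has \<open>measure M S = 0\<close>.\<close>
lemma measure_le_nn_integral_divide:
  assumes "(\<integral>\<^sup>+ \<omega>. ennreal (f \<omega>) \<partial>M) < \<infinity>" "0 < b"
    and "\<And>\<omega>. \<omega> \<in> space M \<Longrightarrow> \<omega> \<in> S \<Longrightarrow> b \<le> f \<omega>"
  shows "measure M S \<le> enn2real (\<integral>\<^sup>+ \<omega>. ennreal (f \<omega>) \<partial>M) / b"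
proof (cases "S \<in> sets M")
  case False
  then show ?thesis using assms(2) by (simp add: measure_notin_sets)
next
  case True
  let ?I = "\<integral>\<^sup>+ \<omega>. ennreal (f \<omega>) \<partial>M"
  have "ennreal b * emeasure M S = (\<integral>\<^sup>+ \<omega>. ennreal b * indicator S \<omega> \<partial>M)"
    using True by (simp add: nn_integral_cmult_indicator)
  also have "\<dots> \<le> ?I"
    using sets.sets_into_space[OF True]
    by (intro nn_integral_mono) (auto simp: indicator_def intro: ennreal_leI assms(3))
  finally have le: "ennreal b * emeasure M S \<le> ?I" .
  then have "emeasure M S \<noteq> \<infinity>"
    using assms(1,2) by (auto simp: ennreal_mult_top)
  then have "ennreal (b * measure M S) \<le> ennreal (enn2real ?I)"
    using le assms(1,2) by (simp add: emeasure_eq_ennreal_measure ennreal_mult)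
  then have "b * measure M S \<le> enn2real ?I"
    by (simp add: ennreal_le_iff)
  then show ?thesis
    using assms(2) by (simp add: field_simps)
qed

lemma light_tailed_if_le_ln:
  assumes "powr_moment M Z" "0 < B"
    and "\<And>\<omega>. \<omega> \<in> space M \<Longrightarrow> 0 < Z \<omega> \<and> X \<omega> \<le> A + B * ln (Z \<omega>)"
  shows "light_tailed M X"
proof -
  obtain \<theta> where "\<theta> > 0" and fin: "finite_exp M (\<lambda>\<omega>. Z \<omega> powr \<theta>)"
    using assms(1) unfolding powr_moment_def by blast
  let ?I = "enn2real (\<integral>\<^sup>+ \<omega>. ennreal (Z \<omega> powr \<theta>) \<partial>M)"
  define \<gamma> where "\<gamma> = \<theta> / B"
  have "\<gamma> > 0" using \<open>\<theta> > 0\<close> \<open>0 < B\<close> by (simp add: \<gamma>_def)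
  have tail: "measure M {\<omega> \<in> space M. X \<omega> > x} \<le> ?I * exp (\<gamma> * A) * exp (- \<gamma> * x)" for x
  proof -
    have "exp (\<gamma> * (x - A)) \<le> Z \<omega> powr \<theta>" if "\<omega> \<in> space M" "X \<omega> > x" for \<omega>
    proof -
      have "\<gamma> * (x - A) \<le> \<gamma> * (B * ln (Z \<omega>))"
        using assms(3)[OF that(1)] that(2) \<open>\<gamma> > 0\<close> by (intro mult_left_mono) simp_all
      then show ?thesis
        using assms(3)[OF that(1)] \<open>0 < B\<close> by (simp add: powr_def \<gamma>_def)
    qed
    then have "measure M {\<omega> \<in> space M. X \<omega> > x} \<le> ?I / exp (\<gamma> * (x - A))"
      using fin unfolding finite_exp_def by (intro measure_le_nn_integral_divide) auto
    then show ?thesis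
      by (simp add: exp_diff exp_minus field_simps)
  qed
  have "(\<lambda>x. measure M {\<omega> \<in> space M. X \<omega> > x}) \<in> O[at_top](\<lambda>x. exp (- \<gamma> * x))"
    by (rule bigoI[where c = "?I * exp (\<gamma> * A)"], rule always_eventually) (use tail in auto)
  then show ?thesis
    unfolding light_tailed_def using \<open>\<gamma> > 0\<close> by blast
qed

lemma powr_moment_card_add_trace_if_trace_mexp:
  fixes A :: "'a \<Rightarrow> complex^'n^'m"
  assumes "powr_moment M (\<lambda>\<omega>. Re (trace (mexp (s \<omega> *\<^sub>R (A \<omega> ** ctrans (A \<omega>))))))"
    and "\<And>\<omega>. \<omega> \<in> space M \<Longrightarrow> 0 \<le> s \<omega>"
  shows "powr_moment M (\<lambda>\<omega>. real CARD('m) + s \<omega> * Re (trace (A \<omega> ** ctrans (A \<omega>))))"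
  using assms(1)
proof (rule powr_moment_mono)
  fix \<omega> assume "\<omega> \<in> space M"
  then show "0 \<le> real CARD('m) + s \<omega> * Re (trace (A \<omega> ** ctrans (A \<omega>)))
      \<and> real CARD('m) + s \<omega> * Re (trace (A \<omega> ** ctrans (A \<omega>)))
        \<le> Re (trace (mexp (s \<omega> *\<^sub>R (A \<omega> ** ctrans (A \<omega>)))))"
    using assms(2) card_add_trace_le_Re_trace_mexp[of "s \<omega>" "A \<omega>"] by (simp add: Re_trace_mult_ctrans)
qed

lemma exp_moment_lambda_max_if_trace_mexp:
  fixes A :: "'a \<Rightarrow> complex^'n^'m"
  assumes "\<theta> > 0" "finite_exp M (\<lambda>\<omega>. Re (trace (mexp ((\<theta> * s \<omega>) *\<^sub>R (A \<omega> ** ctrans (A \<omega>))))))"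
    and "\<And>\<omega>. \<omega> \<in> space M \<Longrightarrow> 0 \<le> s \<omega>"
  shows "exp_moment M (\<lambda>\<omega>. s \<omega> * lambda_max (A \<omega> ** ctrans (A \<omega>)))"
proof -
  have "finite_exp M (\<lambda>\<omega>. exp (\<theta> * (s \<omega> * lambda_max (A \<omega> ** ctrans (A \<omega>)))))"
    using assms(2)
  proof (rule finite_exp_mono)
    fix \<omega> assume "\<omega> \<in> space M"
    then show "exp (\<theta> * (s \<omega> * lambda_max (A \<omega> ** ctrans (A \<omega>))))
        \<le> Re (trace (mexp ((\<theta> * s \<omega>) *\<^sub>R (A \<omega> ** ctrans (A \<omega>)))))"
      using exp_lambda_max_le_Re_trace_mexp[of "\<theta> * s \<omega>" "A \<omega>"] assms(1,3)
      by (simp add: mult.assoc)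
  qed
  then show ?thesis
    unfolding exp_moment_def using assms(1) by blast
qed

lemma log_det_identity_add_le:
  fixes A :: "complex^'n^'m"
  assumes "0 \<le> a" "a \<le> \<kappa> * q" "1 \<le> \<kappa>" "0 \<le> q"
  shows "log 2 (Re (det (mat 1 + a *\<^sub>R (A ** ctrans A))))
    \<le> log 2 (fact CARD('m) * \<kappa> ^ CARD('m)) + CARD('m) * log 2 (1 + q * Re (trace (A ** ctrans A)))"
proof -
  define t where "t = Re (trace (A ** ctrans A))"
  have "0 \<le> t" by (simp add: t_def Re_trace_mult_ctrans)
  have "a * t \<le> \<kappa> * q * t"
    using assms(2) \<open>0 \<le> t\<close> by (rule mult_right_mono)
  then have "1 + a * t \<le> \<kappa> * (1 + q * t)"
    using assms(3) by (simp add: algebra_simps)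
  moreover have "0 < 1 + a * t" "0 < 1 + q * t"
    using assms(1,4) \<open>0 \<le> t\<close> by (simp_all add: add_pos_nonneg)
  ultimately have "ln (1 + a * t) \<le> ln \<kappa> + ln (1 + q * t)"
    using assms(3) by (simp add: ln_mult_pos[symmetric])
  then have "CARD('m) * ln (1 + a * t) \<le> CARD('m) * (ln \<kappa> + ln (1 + q * t))"
    by (rule mult_left_mono) simp
  then have "ln (Re (det (mat 1 + a *\<^sub>R (A ** ctrans A))))
      \<le> ln (fact CARD('m)) + CARD('m) * (ln \<kappa> + ln (1 + q * t))"
    using ln_det_identity_add_le[OF assms(1), of A] unfolding t_def[symmetric] by linarith
  also have "\<dots> = ln (fact CARD('m) * \<kappa> ^ CARD('m)) + CARD('m) * ln (1 + q * t)"
    using assms(3) by (simp add: ln_mult_pos ln_realpow algebra_simps)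
  finally have "ln (Re (det (mat 1 + a *\<^sub>R (A ** ctrans A)))) / ln 2
      \<le> (ln (fact CARD('m) * \<kappa> ^ CARD('m)) + CARD('m) * ln (1 + q * t)) / ln 2"
    by (rule divide_right_mono) simp
  then show ?thesis
    by (simp add: log_def t_def add_divide_distrib)
qed

lemma light_tailed_capacity:
  fixes H :: "'a \<Rightarrow> complex^'nt^'nr" and p :: "'a \<Rightarrow> real"
  assumes "powr_moment M (\<lambda>\<omega>. 1 + p \<omega> * Re (trace (H \<omega> ** ctrans (H \<omega>))))"
    and "\<And>\<omega>. \<omega> \<in> space M \<Longrightarrow> 0 \<le> p \<omega>" and "0 < W" "0 < N0"
  shows "light_tailed M (\<lambda>\<omega>. W * log 2 (Re (det (mat 1
    + (p \<omega> / (real CARD('nt) * N0 * W)) *\<^sub>R (H \<omega> ** ctrans (H \<omega>))))))"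
proof -
  define \<kappa> where "\<kappa> = max 1 (1 / (real CARD('nt) * N0 * W))"
  let ?A = "W * log 2 (fact CARD('nr) * \<kappa> ^ CARD('nr))" and ?B = "W * CARD('nr) / ln 2"
  show ?thesis
  proof (rule light_tailed_if_le_ln[OF assms(1), where A = ?A and B = ?B])
    show "0 < ?B" using \<open>0 < W\<close> by simp
    fix \<omega> assume "\<omega> \<in> space M"
    then have "0 \<le> p \<omega>" by (rule assms(2))
    have "p \<omega> / (real CARD('nt) * N0 * W) = 1 / (real CARD('nt) * N0 * W) * p \<omega>"
      by simp
    also have "\<dots> \<le> \<kappa> * p \<omega>"
      unfolding \<kappa>_def using \<open>0 \<le> p \<omega>\<close> by (intro mult_right_mono) simp_all
    finally have "W * log 2 (Re (det (mat 1
        + (p \<omega> / (real CARD('nt) * N0 * W)) *\<^sub>R (H \<omega> ** ctrans (H \<omega>)))))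
      \<le> W * (log 2 (fact CARD('nr) * \<kappa> ^ CARD('nr))
        + CARD('nr) * log 2 (1 + p \<omega> * Re (trace (H \<omega> ** ctrans (H \<omega>)))))"
      using \<open>0 \<le> p \<omega>\<close> \<open>0 < W\<close> \<open>0 < N0\<close>
      by (intro mult_left_mono log_det_identity_add_le) (simp_all add: \<kappa>_def)
    moreover have "0 < 1 + p \<omega> * Re (trace (H \<omega> ** ctrans (H \<omega>)))"
      using \<open>0 \<le> p \<omega>\<close> by (simp add: Re_trace_mult_ctrans add_pos_nonneg)
    ultimately show "0 < 1 + p \<omega> * Re (trace (H \<omega> ** ctrans (H \<omega>)))
      \<and> W * log 2 (Re (det (mat 1 + (p \<omega> / (real CARD('nt) * N0 * W)) *\<^sub>R (H \<omega> ** ctrans (H \<omega>)))))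
        \<le> ?A + ?B * ln (1 + p \<omega> * Re (trace (H \<omega> ** ctrans (H \<omega>))))"
      by (simp add: log_def algebra_simps)
  qed
qed

theorem theorem6:
  fixes M :: "'a measure"
    and H :: "'a \<Rightarrow> complex^'nt^'nr"
    and p :: "'a \<Rightarrow> real"
    and W N0 :: real
  defines "G \<equiv> (\<lambda>\<omega>. H \<omega> ** ctrans (H \<omega>))"
  defines "lam \<equiv> (\<lambda>\<omega>. lambda_max (G \<omega>))"
  defines "c \<equiv> (\<lambda>\<omega>. W * log 2 (Re (det (mat 1 + scaleR (p \<omega> / (real CARD('nt) * N0 * W)) (G \<omega>)))))"
  defines "C0 \<equiv> (\<exists>\<theta>>0. finite_exp M (\<lambda>\<omega>. (1 + p \<omega> * lam \<omega>) powr \<theta>))"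
  defines "C1 \<equiv> (\<exists>\<theta>>0. finite_exp M (\<lambda>\<omega>. (1 + p \<omega> * Re (trace (G \<omega>))) powr \<theta>))"
  defines "C2 \<equiv> (\<exists>\<theta>>0. finite_exp M (\<lambda>\<omega>. (Re (trace (mat 1 + scaleR (p \<omega>) (G \<omega>)))) powr \<theta>))"
  defines "C3 \<equiv> (\<exists>\<theta>>0. finite_exp M (\<lambda>\<omega>. (Re (trace (mexp (scaleR (p \<omega>) (G \<omega>))))) powr \<theta>))"
  defines "C4 \<equiv> (\<exists>\<theta>>0. finite_exp M (\<lambda>\<omega>. exp (\<theta> * p \<omega> * lam \<omega>)))"
  defines "C5 \<equiv> (\<exists>\<theta>>0. finite_exp M (\<lambda>\<omega>. Re (trace (mexp (scaleR (\<theta> * p \<omega>) (G \<omega>))))))"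
  defines "C6 \<equiv> (\<exists>\<theta>>0. finite_exp M (\<lambda>\<omega>. (p \<omega> * lam \<omega>) powr \<theta>))"
  defines "C7 \<equiv> (\<exists>\<theta>>0. finite_exp M (\<lambda>\<omega>. exp (\<theta> * p \<omega> * Re (trace (G \<omega>)))))"
  assumes "prob_space M"
    and "H \<in> borel_measurable M"
    and "p \<in> borel_measurable M"
    and "\<forall>\<omega>\<in>space M. p \<omega> \<ge> 0"
    and "W > 0" and "N0 > 0"
  shows "(C0 \<longleftrightarrow> C1) \<and> (C2 \<longrightarrow> C1) \<and> (C3 \<longrightarrow> C2) \<and> (C4 \<longrightarrow> C1) \<and> (C5 \<longrightarrow> C4)
         \<and> (C0 \<longleftrightarrow> C6) \<and> (C4 \<longleftrightarrow> C7)
         \<and> ((C0 \<or> C1 \<or> C2 \<or> C3 \<or> C4 \<or> C5 \<or> C6 \<or> C7) \<longrightarrow> light_tailed M c)"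
proof -
  interpret prob_space M by fact
  have p: "0 \<le> p \<omega>" if "\<omega> \<in> space M" for \<omega>
    using \<open>\<forall>\<omega>\<in>space M. p \<omega> \<ge> 0\<close> that by blast
  define L where "L \<omega> = p \<omega> * lam \<omega>" for \<omega>
  define T where "T \<omega> = p \<omega> * Re (trace (G \<omega>))" for \<omega>
  have "L \<in> borel_measurable M"
    unfolding L_def lam_def G_def
    using borel_measurable_continuous_onI[OF continuous_on_lambda_max_mult_ctrans]
      \<open>H \<in> borel_measurable M\<close> \<open>p \<in> borel_measurable M\<close>
    by measurable
  have "0 \<le> L \<omega> \<and> L \<omega> \<le> T \<omega> \<and> T \<omega> \<le> real CARD('nr) * L \<omega>" if "\<omega> \<in> space M" for \<omega>
    using p[OF that] unfolding L_def T_def lam_def G_def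
    by (auto intro: mult_left_mono lambda_max_mult_ctrans_le_trace
        simp: lambda_max_mult_ctrans_nonneg mult.left_commute[of "real _"]
        trace_mult_ctrans_le_card_lambda_max)
  note comparable = moment_conditions_comparable[OF finite_measure_axioms \<open>L \<in> _\<close> _ this]
  have "C0 \<longleftrightarrow> powr_moment M (\<lambda>\<omega>. 1 + L \<omega>)" "C1 \<longleftrightarrow> powr_moment M (\<lambda>\<omega>. 1 + T \<omega>)"
    "C4 \<longleftrightarrow> exp_moment M L" "C6 \<longleftrightarrow> powr_moment M L" "C7 \<longleftrightarrow> exp_moment M T"
    by (simp_all add: C0_def C1_def C4_def C6_def C7_def powr_moment_def exp_moment_def
        L_def T_def mult.assoc)
  moreover have "C2 \<longleftrightarrow> powr_moment M (\<lambda>\<omega>. real CARD('nr) + T \<omega>)"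
    by (simp add: C2_def powr_moment_def T_def Re_trace_add Re_trace_scaleR trace_I)
  moreover have "powr_moment M (\<lambda>\<omega>. real CARD('nr) + T \<omega>) \<Longrightarrow> powr_moment M (\<lambda>\<omega>. 1 + T \<omega>)"
    by (erule powr_moment_mono) (use p in \<open>auto simp: T_def G_def Re_trace_mult_ctrans Suc_leI\<close>)
  moreover have "C3 \<longrightarrow> C2"
    unfolding C3_def powr_moment_def[symmetric] \<open>C2 \<longleftrightarrow> _\<close> T_def G_def
    using p by (blast intro: powr_moment_card_add_trace_if_trace_mexp)
  moreover have "C5 \<longrightarrow> C4"
    unfolding C5_def \<open>C4 \<longleftrightarrow> _\<close> L_def lam_def G_def
    using p by (blast intro: exp_moment_lambda_max_if_trace_mexp)
  moreover have "C1 \<longrightarrow> light_tailed M c"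
    unfolding C1_def powr_moment_def[symmetric] c_def G_def
    by (intro impI light_tailed_capacity) (use p \<open>W > 0\<close> \<open>N0 > 0\<close> in auto)
  ultimately show ?thesis
    using comparable by auto
qed

end
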